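(* Let $u,u'\in R^{\times}$ and $a,a'\in R$. If $1-q\in R^{\times}$ and $\mathrm{Id}_{H_N^q}(\mathcal{B}_{(u,a)})=\mathrm{Id}_{H_N^q}(\mathcal{B}_{(u',a')})$, then $a'=a$.
   Context: $R$ is a commutative unital ring, $N\ge2$, and $q\in R$ a root of the $N$-th cyclotomic polynomial over $\mathbb{Z}$. $H_N^q$ is the Taft Hopf algebra over $R$: generated by $g,x$ with $g^N=1$, $x^N=0$, $xg=qgx$, $\Delta(g)=g\otimes g$, $\Delta(x)=1\otimes x+x\otimes g$, $\varepsilon(g)=1$, $\varepsilon(x)=0$, free over $R$ with basis $\{g^mx^n:0\le m,n<N\}$. For $u\in R^{\times},a\in R$, $\mathcal{B}_{(u,a)}$ is the $R$-algebra generated by $v_g,v_x$ with $v_g^N=u$, $v_x^N=a$, $v_xv_g=qv_gv_x$, a right $H_N^q$-comodule algebra via $v_g\mapsto v_g\otimes g$, $v_x\mapsto1\otimes x+v_x\otimes g$. Let $Z_i^H$ ($i\ge1$) be copies $\{Z_i^h:h\in H_N^q\}$ of the $R$-module $H_N^q$ and $T=T(\bigoplus_iZ_i^H)$ the tensor algebra with coaction $\delta(Z_i^h)=\sum Z_i^{h_1}\otimes h_2$. $P\in T$ is a polynomial $H_N^q$-identity for a right $H_N^q$-comodule algebra $B$ if $f(P)=0$ for all right $H_N^q$-comodule algebra maps $f:T\to B$; $\mathrm{Id}_{H_N^q}(B)$ is the set of these. *)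

theory Defs
  imports "HOL-Computational_Algebra.Polynomial"
begin

text \<open>Standard recursive definition: X^n - 1 is the product of the cyclotomic
  polynomials of the divisors of n (n > 0).\<close>

fun cyclotomic :: "nat \<Rightarrow> int poly" where
  "cyclotomic n =
     (if n = 0 then 1
      else (monom 1 n - 1) div (\<Prod>d\<in>{d. d dvd n \<and> d < n}. cyclotomic d))"

declare cyclotomic.simps [simp del]

definition is_cyclotomic_root :: "nat \<Rightarrow> 'a::comm_ring_1 \<Rightarrow> bool" where
  "is_cyclotomic_root N q \<longleftrightarrow> poly (map_poly of_int (cyclotomic N)) q = 0"

text \<open>An element of a free R-module with basis indexed by a finite set I is a
  coefficient function I -> R (required to vanish outside I).  An algebra
  structure is given by structure constants mu i j k = coefficient of b_k in b_i b_j.\<close>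

definition supp_in :: "'i set \<Rightarrow> ('i \<Rightarrow> 'a::zero) \<Rightarrow> bool" where
  "supp_in I v \<longleftrightarrow> (\<forall>k. k \<notin> I \<longrightarrow> v k = 0)"

definition bvec :: "'i \<Rightarrow> 'i \<Rightarrow> 'a::zero_neq_one" where
  "bvec i = (\<lambda>k. if k = i then 1 else 0)"

definition amul :: "'i set \<Rightarrow> ('i \<Rightarrow> 'i \<Rightarrow> 'i \<Rightarrow> 'a::comm_ring_1)
                    \<Rightarrow> ('i \<Rightarrow> 'a) \<Rightarrow> ('i \<Rightarrow> 'a) \<Rightarrow> ('i \<Rightarrow> 'a)" where
  "amul I mu v w = (\<lambda>k. \<Sum>i\<in>I. \<Sum>j\<in>I. v i * w j * mu i j k)"

primrec apow :: "'i set \<Rightarrow> ('i \<Rightarrow> 'i \<Rightarrow> 'i \<Rightarrow> 'a::comm_ring_1) \<Rightarrow> 'i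
                 \<Rightarrow> ('i \<Rightarrow> 'a) \<Rightarrow> nat \<Rightarrow> ('i \<Rightarrow> 'a)" where
  "apow I mu e v 0 = bvec e"
| "apow I mu e v (Suc n) = amul I mu (apow I mu e v n) v"

definition tmu :: "('i \<Rightarrow> 'i \<Rightarrow> 'i \<Rightarrow> 'a::comm_ring_1) \<Rightarrow> ('j \<Rightarrow> 'j \<Rightarrow> 'j \<Rightarrow> 'a)
                  \<Rightarrow> ('i \<times> 'j) \<Rightarrow> ('i \<times> 'j) \<Rightarrow> ('i \<times> 'j) \<Rightarrow> 'a" where
  "tmu mu1 mu2 = (\<lambda>(i, j) (i', j') (k, l). mu1 i i' k * mu2 j j' l)"

definition tens :: "('i \<Rightarrow> 'a::comm_ring_1) \<Rightarrow> ('j \<Rightarrow> 'a) \<Rightarrow> ('i \<times> 'j \<Rightarrow> 'a)" where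
  "tens v w = (\<lambda>(k, l). v k * w l)"

text \<open>Basis index set {g^m x^n : 0 <= m,n < N} (resp. {v_g^m v_x^n}).\<close>

definition BI :: "nat \<Rightarrow> (nat \<times> nat) set" where
  "BI N = {..<N} \<times> {..<N}"

text \<open>Structure constants of the algebra generated by G, X with G^N = u, X^N = a,
  X G = q G X, in the basis G^m X^n (0 <= m,n < N):
  (G^m X^n)(G^k X^l) = q^(n k) G^(m+k) X^(n+l), then reduce G^(m+k) and X^(n+l)
  using G^N = u and X^N = a.\<close>

definition gmu :: "nat \<Rightarrow> 'a::comm_ring_1 \<Rightarrow> 'a \<Rightarrow> 'a
                   \<Rightarrow> nat \<times> nat \<Rightarrow> nat \<times> nat \<Rightarrow> nat \<times> nat \<Rightarrow> 'a" where
  "gmu N q u a = (\<lambda>(m, n) (k, l) (m', n').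
      if m' = (m + k) mod N \<and> n' = (n + l) mod N
      then q ^ (n * k) * (if m + k < N then 1 else u) * (if n + l < N then 1 else a)
      else 0)"

text \<open>Taft algebra: g^N = 1, x^N = 0, x g = q g x.\<close>

definition taft_mu :: "nat \<Rightarrow> 'a::comm_ring_1 \<Rightarrow> nat \<times> nat \<Rightarrow> nat \<times> nat \<Rightarrow> nat \<times> nat \<Rightarrow> 'a" where
  "taft_mu N q = gmu N q 1 0"

definition B_mu :: "nat \<Rightarrow> 'a::comm_ring_1 \<Rightarrow> 'a \<Rightarrow> 'a \<Rightarrow> nat \<times> nat \<Rightarrow> nat \<times> nat \<Rightarrow> nat \<times> nat \<Rightarrow> 'a" where
  "B_mu N q u a = gmu N q u a"

abbreviation one_idx :: "nat \<times> nat" where "one_idx \<equiv> (0, 0)"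
abbreviation g_idx :: "nat \<times> nat" where "g_idx \<equiv> (1, 0)"
abbreviation x_idx :: "nat \<times> nat" where "x_idx \<equiv> (0, 1)"

text \<open>Comultiplication of H: the algebra map H -> H (x) H with
  Delta(g) = g (x) g and Delta(x) = 1 (x) x + x (x) g, so
  Delta(g^m x^n) = Delta(g)^m Delta(x)^n computed in H (x) H.\<close>

definition taft_Delta :: "nat \<Rightarrow> 'a::comm_ring_1 \<Rightarrow> nat \<times> nat \<Rightarrow> ((nat \<times> nat) \<times> (nat \<times> nat) \<Rightarrow> 'a)" where
  "taft_Delta N q = (\<lambda>(m, n).
     (let I2 = BI N \<times> BI N; mu2 = tmu (taft_mu N q) (taft_mu N q); e2 = (one_idx, one_idx);
          Dg = tens (bvec g_idx) (bvec g_idx);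
          Dx = (\<lambda>t. tens (bvec one_idx) (bvec x_idx) t + tens (bvec x_idx) (bvec g_idx) t)
      in amul I2 mu2 (apow I2 mu2 e2 Dg m) (apow I2 mu2 e2 Dx n)))"

text \<open>Coaction of B_(u,a): the algebra map B -> B (x) H with
  v_g |-> v_g (x) g and v_x |-> 1 (x) x + v_x (x) g, so
  rho(v_g^m v_x^n) = rho(v_g)^m rho(v_x)^n computed in B (x) H.\<close>

definition B_rho :: "nat \<Rightarrow> 'a::comm_ring_1 \<Rightarrow> 'a \<Rightarrow> 'a \<Rightarrow> nat \<times> nat \<Rightarrow> ((nat \<times> nat) \<times> (nat \<times> nat) \<Rightarrow> 'a)" where
  "B_rho N q u a = (\<lambda>(m, n).
     (let I2 = BI N \<times> BI N; mu2 = tmu (B_mu N q u a) (taft_mu N q); e2 = (one_idx, one_idx);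
          Rg = tens (bvec g_idx) (bvec g_idx);
          Rx = (\<lambda>t. tens (bvec one_idx) (bvec x_idx) t + tens (bvec x_idx) (bvec g_idx) t)
      in amul I2 mu2 (apow I2 mu2 e2 Rg m) (apow I2 mu2 e2 Rx n)))"

definition lin_ext :: "'i set \<Rightarrow> ('i \<Rightarrow> ('k \<Rightarrow> 'a::comm_ring_1)) \<Rightarrow> ('i \<Rightarrow> 'a) \<Rightarrow> ('k \<Rightarrow> 'a)" where
  "lin_ext I f v = (\<lambda>k. \<Sum>i\<in>I. v i * f i k)"

text \<open>An R-linear map phi : H -> B_(u,a), given by its values phi(g^m x^n), is a
  morphism of right H-comodules iff rho_B(phi(h)) = (phi (x) id)(Delta h)
  for all basis vectors h.\<close>

definition B_comodule_map :: "nat \<Rightarrow> 'a::comm_ring_1 \<Rightarrow> 'a \<Rightarrow> 'a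
                              \<Rightarrow> (nat \<times> nat \<Rightarrow> (nat \<times> nat \<Rightarrow> 'a)) \<Rightarrow> bool" where
  "B_comodule_map N q u a phi \<longleftrightarrow>
     (\<forall>i\<in>BI N. supp_in (BI N) (phi i)) \<and>
     (\<forall>i\<in>BI N.
        lin_ext (BI N) (B_rho N q u a) (phi i)
        = lin_ext (BI N \<times> BI N) (\<lambda>(j, l). tens (phi j) (bvec l)) (taft_Delta N q i))"

text \<open>T = T(\<Oplus>_i Z_i^H) is the free (noncommutative) R-algebra on the symbols
  Z_i^(g^m x^n) (i a natural number, 0 <= m,n < N), since each Z_i^H is free with
  that basis.  An element is a finitely supported coefficient function on words.\<close>

type_synonym letter = "nat \<times> (nat \<times> nat)"

definition T_elem :: "nat \<Rightarrow> (letter list \<Rightarrow> 'a::zero) \<Rightarrow> bool" where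
  "T_elem N P \<longleftrightarrow> finite {w. P w \<noteq> 0} \<and>
     (\<forall>w. P w \<noteq> 0 \<longrightarrow> (\<forall>c\<in>set w. snd c \<in> BI N))"

text \<open>A comodule algebra map f : T -> B is the same as a family (phi_i) of
  comodule maps phi_i : H -> B (f(Z_i^h) = phi_i(h)), extended multiplicatively.\<close>

definition B_eval_word :: "nat \<Rightarrow> 'a::comm_ring_1 \<Rightarrow> 'a \<Rightarrow> 'a
      \<Rightarrow> (nat \<Rightarrow> nat \<times> nat \<Rightarrow> (nat \<times> nat \<Rightarrow> 'a)) \<Rightarrow> letter list \<Rightarrow> (nat \<times> nat \<Rightarrow> 'a)" where
  "B_eval_word N q u a phi w =
     foldl (\<lambda>acc c. amul (BI N) (B_mu N q u a) acc (phi (fst c) (snd c))) (bvec one_idx) w"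

definition B_eval :: "nat \<Rightarrow> 'a::comm_ring_1 \<Rightarrow> 'a \<Rightarrow> 'a
      \<Rightarrow> (nat \<Rightarrow> nat \<times> nat \<Rightarrow> (nat \<times> nat \<Rightarrow> 'a)) \<Rightarrow> (letter list \<Rightarrow> 'a) \<Rightarrow> (nat \<times> nat \<Rightarrow> 'a)" where
  "B_eval N q u a phi P =
     (\<lambda>k. \<Sum>w\<in>{w. P w \<noteq> 0}. P w * B_eval_word N q u a phi w k)"

definition Id_B :: "nat \<Rightarrow> 'a::comm_ring_1 \<Rightarrow> 'a \<Rightarrow> 'a \<Rightarrow> (letter list \<Rightarrow> 'a) set" where
  "Id_B N q u a = {P. T_elem N P \<and>
      (\<forall>phi. (\<forall>i. B_comodule_map N q u a (phi i)) \<longrightarrow> B_eval N q u a phi P = (\<lambda>_. 0))}"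

end

(*
  Let K = (q^0 - q^1)(q^1 - q^2)...(q^(N-1) - q^0) and let P be the element
  [Z^g, Z^x]^N - K a (Z^1)^N (Z^g)^N of T, all variables taken from Z_0^H.
  Comparing coefficients in the comodule condition shows that a comodule map
  phi : H -> B_(u,a) has phi(1) = c, phi(g) = e v_g and phi(x) = c v_x + d v_g for
  scalars c, d, e. Then phi sends [Z^g, Z^x] to c e (1 - q) v_g v_x, whose N-th power
  is (c e)^N K u a, while (Z^1)^N (Z^g)^N goes to (c e)^N u. Hence P is an identity of
  B_(u,a). If B_(u',a') has the same identities, evaluating P at the identity of the
  common basis (c = e = 1, d = 0) gives K u' (a' - a) = 0. Since q is a root of the
  N-th cyclotomic polynomial, a divisor of X^N - 1, we have q^N = 1, so K is a power
  of q times (1 - q)^N, a unit; hence a' = a.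
*)
theory Submission
  imports Defs "HOL-Computational_Algebra.Polynomial_Factorial"
    "HOL-Computational_Algebra.Fundamental_Theorem_Algebra"
begin

section \<open>Cyclotomic polynomials\<close>

lemma map_poly_of_int_diff:
  "map_poly (of_int :: int \<Rightarrow> 'a::comm_ring_1) (p - q) = map_poly of_int p - map_poly of_int q"
  by (rule poly_eqI) (simp add: coeff_map_poly)

lemma map_poly_of_int_mult:
  "map_poly (of_int :: int \<Rightarrow> 'a::comm_ring_1) (p * q) = map_poly of_int p * map_poly of_int q"
  by (rule poly_eqI) (simp add: coeff_map_poly coeff_mult)

lemma map_poly_of_int_prod:
  "map_poly (of_int :: int \<Rightarrow> 'a::comm_ring_1) (\<Prod>i\<in>A. f i) = (\<Prod>i\<in>A. map_poly of_int (f i))"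
  by (induction A rule: infinite_finite_induct) (simp_all add: map_poly_of_int_mult)

lemma poly_of_int_prod:
  "poly (map_poly (of_int :: int \<Rightarrow> 'a::comm_ring_1) (\<Prod>i\<in>A. f i)) x
     = (\<Prod>i\<in>A. poly (map_poly of_int (f i)) x)"
  by (simp add: map_poly_of_int_prod poly_prod)

lemma poly_of_int_X_pow_minus_1:
  "poly (map_poly (of_int :: int \<Rightarrow> 'a::comm_ring_1) (monom 1 n - 1)) x = x ^ n - 1"
  by (simp add: map_poly_of_int_diff map_poly_monom poly_monom)

lemma X_pow_minus_1_dvd:
  fixes d n :: nat
  assumes "d dvd n"
  shows "(monom 1 d - 1 :: 'a::comm_ring_1 poly) dvd monom 1 n - 1"
proof -
  obtain k where "n = d * k" using assms by blast
  then have "(monom 1 n :: 'a poly) = monom 1 d ^ k"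
    by (simp add: monom_power)
  moreover have "(monom 1 d :: 'a poly) ^ k - 1 = (monom 1 d - 1) * (\<Sum>i<k. monom 1 d ^ i)"
    by (rule power_diff_1_eq)
  ultimately show ?thesis by (metis dvd_triv_left)
qed

lemma prod_divisors_eq:
  fixes n :: nat
  assumes "0 < n"
  shows "(\<Prod>d | d dvd n. f d) = f n * (\<Prod>d | d dvd n \<and> d < n. f d)"
proof -
  have "{d. d dvd n} = insert n {d. d dvd n \<and> d < n}"
    using assms by (auto dest: dvd_imp_le simp: order.order_iff_strict)
  moreover have "finite {d. d dvd n \<and> d < n}"
    by (rule finite_subset[of _ "{..<n}"]) auto
  ultimately show ?thesis
    by (simp add: prod.insert)
qed

lemma cyclotomic_eq_div:
  "0 < n \<Longrightarrow> cyclotomic n = (monom 1 n - 1) div (\<Prod>d | d dvd n \<and> d < n. cyclotomic d)"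
  by (subst cyclotomic.simps) simp

text \<open>The lemmas below take the factorization of \<open>X ^ m - 1\<close> as a hypothesis: it is
  established by strong induction on \<open>m\<close> in \<open>prod_cyclotomic_divisors\<close>.\<close>

lemma cyclotomic_root_imp_pow_eq_1:
  fixes z :: "'a::comm_ring_1"
  assumes "(\<Prod>d | d dvd m. cyclotomic d) = monom 1 m - 1" "0 < m" "d dvd m"
    and "poly (map_poly of_int (cyclotomic d)) z = 0"
  shows "z ^ m = 1"
proof -
  have "z ^ m - 1 = poly (map_poly of_int (monom 1 m - 1)) z"
    by (simp only: poly_of_int_X_pow_minus_1)
  also have "\<dots> = (\<Prod>d | d dvd m. poly (map_poly of_int (cyclotomic d)) z)"
    by (simp only: assms(1) [symmetric] poly_of_int_prod)
  also have "\<dots> = 0"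
    using assms by (intro prod_zero) auto
  finally show ?thesis by simp
qed

lemma pow_eq_1_imp_cyclotomic_root:
  fixes z :: "'a::idom"
  assumes "(\<Prod>d | d dvd m. cyclotomic d) = monom 1 m - 1" "0 < m" "z ^ m = 1"
  obtains d where "d dvd m" "poly (map_poly of_int (cyclotomic d)) z = 0"
proof -
  have "(\<Prod>d | d dvd m. poly (map_poly of_int (cyclotomic d)) z) = poly (map_poly of_int (monom 1 m - 1)) z"
    by (simp only: assms(1) [symmetric] poly_of_int_prod)
  also have "\<dots> = 0"
    by (simp only: poly_of_int_X_pow_minus_1) (simp add: assms(3))
  finally have "(\<Prod>d | d dvd m. poly (map_poly of_int (cyclotomic d)) z) = 0" .
  then show ?thesis using that assms(2) by (auto simp: prod_zero_iff)
qed

text \<open>\<open>X ^ m - 1\<close> has no multiple roots in characteristic 0, its derivative being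
  \<open>m X ^ (m - 1)\<close>.\<close>

lemma cyclotomic_no_common_root:
  fixes z :: "'a::{idom,ring_char_0}"
  assumes fact: "(\<Prod>d | d dvd m. cyclotomic d) = monom 1 m - 1" and "0 < m"
    and "c dvd m" "c \<noteq> m"
    and root_m: "poly (map_poly of_int (cyclotomic m)) z = 0"
    and root_c: "poly (map_poly of_int (cyclotomic c)) z = 0"
  shows False
proof -
  have "z ^ m = 1" using cyclotomic_root_imp_pow_eq_1[OF fact \<open>0 < m\<close> _ root_m] by simp
  then have "z \<noteq> 0" using \<open>0 < m\<close> by (metis power_0_left less_not_refl2 zero_neq_one)
  define rest where "rest = (\<Prod>d | d dvd m \<and> d < m \<and> d \<noteq> c. cyclotomic d)"
  have "(\<Prod>d | d dvd m \<and> d < m. cyclotomic d) = cyclotomic c * rest"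
  proof -
    have "{d. d dvd m \<and> d < m} = insert c {d. d dvd m \<and> d < m \<and> d \<noteq> c}"
      using assms(3,4) \<open>0 < m\<close> by (auto dest: dvd_imp_le)
    then show ?thesis using \<open>0 < m\<close> by (simp add: rest_def)
  qed
  then have "monom 1 m - 1 = cyclotomic m * (cyclotomic c * rest)"
    using fact prod_divisors_eq[OF \<open>0 < m\<close>, of cyclotomic] by simp
  then have "pderiv (map_poly (of_int :: int \<Rightarrow> 'a) (monom 1 m - 1))
      = pderiv (map_poly of_int (cyclotomic m) * (map_poly of_int (cyclotomic c) * map_poly of_int rest))"
    by (simp add: map_poly_of_int_mult)
  then have "poly (pderiv (map_poly (of_int :: int \<Rightarrow> 'a) (monom 1 m - 1))) z = 0"
    using root_m root_c by (simp add: pderiv_mult)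
  moreover have "poly (pderiv (map_poly (of_int :: int \<Rightarrow> 'a) (monom 1 m - 1))) z = of_nat m * z ^ (m - 1)"
    by (simp add: map_poly_of_int_diff map_poly_monom pderiv_diff pderiv_monom poly_monom)
  ultimately show False using \<open>z \<noteq> 0\<close> \<open>0 < m\<close> by simp
qed

lemma is_unit_lead_coeff_cyclotomic:
  assumes "(\<Prod>d | d dvd m. cyclotomic d) = monom 1 m - 1" "0 < m"
  shows "is_unit (lead_coeff (cyclotomic m))"
proof -
  have "degree (- 1 :: int poly) < degree (monom 1 m :: int poly)"
    using \<open>0 < m\<close> by (simp add: degree_monom_eq)
  then have "lead_coeff (- 1 + monom 1 m :: int poly) = lead_coeff (monom 1 m :: int poly)"
    by (rule lead_coeff_add_le)
  then have "lead_coeff (monom 1 m - 1 :: int poly) = 1"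
    by (simp add: degree_monom_eq)
  moreover have "monom 1 m - 1 = cyclotomic m * (\<Prod>d | d dvd m \<and> d < m. cyclotomic d)"
    using assms prod_divisors_eq by metis
  ultimately have "1 = lead_coeff (cyclotomic m) * lead_coeff (\<Prod>d | d dvd m \<and> d < m. cyclotomic d)"
    by (metis lead_coeff_mult)
  then show ?thesis by (metis dvd_triv_left)
qed

text \<open>A common complex root \<open>z\<close> of \<open>\<Phi>\<^sub>d\<close> and \<open>\<Phi>\<^sub>e\<close> satisfies \<open>z ^ gcd d e = 1\<close>, so it is
  also a root of some \<open>\<Phi>\<^sub>c\<close> with \<open>c\<close> dividing \<open>gcd d e\<close>, which is a proper divisor of
  \<open>d\<close> or of \<open>e\<close>; this contradicts \<open>cyclotomic_no_common_root\<close>.\<close>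

lemma coprime_cyclotomic:
  assumes IH: "\<And>m. 0 < m \<Longrightarrow> m < n \<Longrightarrow> (\<Prod>d | d dvd m. cyclotomic d) = monom 1 m - 1"
    and "0 < d" "d < n" "0 < e" "e < n" "d \<noteq> e"
  shows "coprime (cyclotomic d) (cyclotomic e)"
proof (rule coprimeI)
  fix c assume cd: "c dvd cyclotomic d" and ce: "c dvd cyclotomic e"
  show "is_unit c"
  proof (cases "degree c = 0")
    case True
    then obtain a where c: "c = [:a:]" by (rule degree_eq_zeroE)
    from cd obtain h where "cyclotomic d = c * h" by (auto elim: dvdE)
    then have "lead_coeff (cyclotomic d) = a * lead_coeff h" by (simp add: c lead_coeff_mult)
    moreover have "is_unit (lead_coeff (cyclotomic d))"
      using is_unit_lead_coeff_cyclotomic IH \<open>0 < d\<close> \<open>d < n\<close> by blast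
    ultimately have "is_unit a" by (metis dvd_mult_left)
    then show ?thesis by (simp add: c is_unit_const_poly_iff)
  next
    case False
    then have "\<not> constant (poly (map_poly (of_int :: int \<Rightarrow> complex) c))"
      by (simp add: constant_degree degree_map_poly)
    then obtain z :: complex where z: "poly (map_poly of_int c) z = 0"
      using fundamental_theorem_of_algebra by blast
    have root: "poly (map_poly of_int (cyclotomic k)) z = 0" if "c dvd cyclotomic k" for k
    proof -
      from that obtain h where "cyclotomic k = c * h" by (auto elim: dvdE)
      then show ?thesis using z by (simp add: map_poly_of_int_mult)
    qed
    define g where "g = gcd d e"
    have "0 < g" "g dvd d" "g dvd e" "g \<le> d" "g \<le> e"
      using \<open>0 < d\<close> \<open>0 < e\<close> by (simp_all add: g_def)
    have "z ^ d = 1"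
      by (rule cyclotomic_root_imp_pow_eq_1[OF IH[OF \<open>0 < d\<close> \<open>d < n\<close>] \<open>0 < d\<close> dvd_refl root[OF cd]])
    have "z ^ e = 1"
      by (rule cyclotomic_root_imp_pow_eq_1[OF IH[OF \<open>0 < e\<close> \<open>e < n\<close>] \<open>0 < e\<close> dvd_refl root[OF ce]])
    obtain x y where xy: "d * x = e * y + g"
      using bezout_nat[of d e] \<open>0 < d\<close> unfolding g_def by auto
    have "1 = z ^ (d * x)" by (simp add: power_mult \<open>z ^ d = 1\<close>)
    also have "\<dots> = (z ^ e) ^ y * z ^ g" by (simp add: xy power_add power_mult)
    finally have "z ^ g = 1" by (simp add: \<open>z ^ e = 1\<close>)
    then obtain c' where "c' dvd g" and root_c': "poly (map_poly of_int (cyclotomic c')) z = 0"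
      using pow_eq_1_imp_cyclotomic_root[OF IH[OF \<open>0 < g\<close>] \<open>0 < g\<close>] \<open>g \<le> d\<close> \<open>d < n\<close> by auto
    have "c' \<le> g"
      using \<open>c' dvd g\<close> \<open>0 < g\<close> by (rule dvd_imp_le)
    have "g < d \<or> g < e"
      using \<open>d \<noteq> e\<close> \<open>g \<le> d\<close> \<open>g \<le> e\<close> by linarith
    then obtain D where "D \<in> {d, e}" "g < D"
      by blast
    then have "0 < D" "D < n" "c' dvd D" "c' \<noteq> D" "poly (map_poly of_int (cyclotomic D)) z = 0"
      using \<open>0 < d\<close> \<open>0 < e\<close> \<open>d < n\<close> \<open>e < n\<close> \<open>c' dvd g\<close> \<open>c' \<le> g\<close> \<open>g dvd d\<close> \<open>g dvd e\<close> root cd ce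
      by (auto intro: dvd_trans)
    then show ?thesis
      using cyclotomic_no_common_root[OF IH[of D] _ _ _ _ root_c'] by blast
  qed
qed

lemma cyclotomic_dvd_X_pow_minus_1:
  assumes "(\<Prod>d | d dvd m. cyclotomic d) = monom 1 m - 1" "0 < m" "m dvd n"
  shows "cyclotomic m dvd monom 1 n - 1"
proof -
  have "cyclotomic m dvd monom 1 m - 1"
    using assms(1) prod_divisors_eq[OF \<open>0 < m\<close>, of cyclotomic] by (metis dvd_triv_left)
  then show ?thesis
    using X_pow_minus_1_dvd[OF \<open>m dvd n\<close>] by (rule dvd_trans)
qed

lemma prod_cyclotomic_divisors:
  "0 < n \<Longrightarrow> (\<Prod>d | d dvd n. cyclotomic d) = monom 1 n - 1"
proof (induction n rule: less_induct)
  case (less n)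
  let ?D = "{d. d dvd n \<and> d < n}"
  have IH: "(\<Prod>d | d dvd m. cyclotomic d) = monom 1 m - 1" if "0 < m" "m < n" for m
    using less.IH that by blast
  have D: "0 < d" "d < n" "d dvd n" if "d \<in> ?D" for d
  proof -
    show "d dvd n" "d < n" using that by simp_all
    then show "0 < d" using less.prems by (cases "d = 0") simp_all
  qed
  have "finite ?D"
    by (rule finite_subset[of _ "{..<n}"]) auto
  have "(\<Prod>d\<in>A. cyclotomic d) dvd monom 1 n - 1" if "A \<subseteq> ?D" for A
    using finite_subset[OF that \<open>finite ?D\<close>] that
  proof (induction A rule: finite_induct)
    case (insert d A)
    have "d \<in> ?D" "A \<subseteq> ?D" using insert.prems by simp_all
    have "coprime (cyclotomic d) (\<Prod>e\<in>A. cyclotomic e)"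
    proof (rule prod_coprime_right)
      fix e assume "e \<in> A"
      then have "e \<in> ?D" "d \<noteq> e" using \<open>A \<subseteq> ?D\<close> insert.hyps(2) by blast+
      then show "coprime (cyclotomic d) (cyclotomic e)"
        using coprime_cyclotomic[OF IH D(1,2)[OF \<open>d \<in> ?D\<close>] D(1,2)[OF \<open>e \<in> ?D\<close>]] by simp
    qed
    moreover have "cyclotomic d dvd monom 1 n - 1"
      using cyclotomic_dvd_X_pow_minus_1[OF IH[OF D(1,2)] D(1,3)] \<open>d \<in> ?D\<close> by simp
    moreover have "(\<Prod>e\<in>A. cyclotomic e) dvd monom 1 n - 1"
      using insert.IH \<open>A \<subseteq> ?D\<close> by blast
    ultimately show ?case
      using insert.hyps by (simp add: divides_mult)
  qed simp
  then have "cyclotomic n * (\<Prod>d\<in>?D. cyclotomic d) = monom 1 n - 1"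
    using cyclotomic_eq_div[OF less.prems] by simp
  then show ?case
    using prod_divisors_eq[OF less.prems, of cyclotomic] by simp
qed

lemma cyclotomic_root_pow_eq_1:
  assumes "0 < N" "is_cyclotomic_root N q"
  shows "q ^ N = 1"
  using cyclotomic_root_imp_pow_eq_1[OF prod_cyclotomic_divisors[OF \<open>0 < N\<close>] \<open>0 < N\<close> dvd_refl]
    assms(2) unfolding is_cyclotomic_root_def by blast

section \<open>Vectors and algebras given by structure constants\<close>

definition monomial :: "'a::zero \<Rightarrow> 'i \<Rightarrow> 'i \<Rightarrow> 'a" where
  "monomial c i = (\<lambda>k. if k = i then c else 0)"

lemma bvec_eq_monomial: "bvec i = monomial 1 i"
  by (simp add: bvec_def monomial_def)

lemma tens_bvec_bvec: "tens (bvec i) (bvec j) = monomial 1 (i, j)"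
  by (rule ext) (simp add: tens_def bvec_def monomial_def split: prod.split)

lemma sum_eq_single:
  assumes "finite I" "i \<in> I" "\<And>j. j \<in> I \<Longrightarrow> j \<noteq> i \<Longrightarrow> f j = 0"
  shows "(\<Sum>j\<in>I. f j) = f i"
  using assms sum.remove[OF assms(1,2), of f] by simp

lemma amul_monomial_left:
  assumes "finite I" "i \<in> I"
  shows "amul I mu (monomial c i) w = (\<lambda>k. \<Sum>r\<in>I. c * w r * mu i r k)"
proof
  fix k
  show "amul I mu (monomial c i) w k = (\<Sum>r\<in>I. c * w r * mu i r k)"
    unfolding amul_def by (subst sum_eq_single[OF assms]) (simp_all add: monomial_def)
qed

lemma amul_monomial_right:
  assumes "finite I" "j \<in> I"
  shows "amul I mu v (monomial d j) = (\<lambda>k. \<Sum>s\<in>I. v s * d * mu s j k)"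
proof
  fix k
  show "amul I mu v (monomial d j) k = (\<Sum>s\<in>I. v s * d * mu s j k)"
    unfolding amul_def by (intro sum.cong refl, subst sum_eq_single[OF assms]) (simp_all add: monomial_def)
qed

lemma amul_monomial_monomial:
  assumes "finite I" "i \<in> I" "j \<in> I"
  shows "amul I mu (monomial c i) (monomial d j) = (\<lambda>k. c * d * mu i j k)"
  unfolding amul_monomial_left[OF assms(1,2)]
  by (subst sum_eq_single[OF assms(1,3)]) (simp_all add: monomial_def)

lemma amul_add_left:
  "amul I mu (\<lambda>k. v k + v' k) w = (\<lambda>k. amul I mu v w k + amul I mu v' w k)"
  unfolding amul_def by (simp add: ring_distribs sum.distrib)

lemma amul_add_right:
  "amul I mu v (\<lambda>k. w k + w' k) = (\<lambda>k. amul I mu v w k + amul I mu v w' k)"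
  unfolding amul_def by (simp add: ring_distribs sum.distrib)

lemma amul_sum_left:
  "amul I mu (\<lambda>k. \<Sum>x\<in>A. c x * f x k) w = (\<lambda>k. \<Sum>x\<in>A. c x * amul I mu (f x) w k)"
  unfolding amul_def
  by (simp add: sum_distrib_left sum_distrib_right mult.assoc sum.swap[of _ A])

lemma amul_nonzeroE:
  assumes "amul I mu v w k \<noteq> 0"
  obtains s r where "s \<in> I" "r \<in> I" "v s \<noteq> 0" "w r \<noteq> 0" "mu s r k \<noteq> 0"
proof -
  have "\<exists>s\<in>I. \<exists>r\<in>I. v s * w r * mu s r k \<noteq> 0"
    using assms unfolding amul_def by (meson sum.neutral)
  then show ?thesis using that by fastforce
qed

lemma amul_cong:
  assumes "\<And>s r. s \<in> I \<Longrightarrow> r \<in> I \<Longrightarrow> v s \<noteq> 0 \<Longrightarrow> w r \<noteq> 0 \<Longrightarrow> mu s r = mu' s r"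
  shows "amul I mu v w = amul I mu' v w"
proof
  fix k
  have "v s * w r * mu s r k = v s * w r * mu' s r k" if "s \<in> I" "r \<in> I" for s r
    using assms[OF that] by (cases "v s = 0"; cases "w r = 0") auto
  then show "amul I mu v w k = amul I mu' v w k"
    unfolding amul_def by (auto intro!: sum.cong)
qed

lemma lin_ext_monomial:
  assumes "finite I" "i \<in> I"
  shows "lin_ext I f (monomial c i) = (\<lambda>k. c * f i k)"
  unfolding lin_ext_def by (rule ext, subst sum_eq_single[OF assms]) (simp_all add: monomial_def)

lemma lin_ext_add:
  "lin_ext I f (\<lambda>i. v i + v' i) = (\<lambda>k. lin_ext I f v k + lin_ext I f v' k)"
  unfolding lin_ext_def by (simp add: ring_distribs sum.distrib)

lemma finite_BI: "finite (BI N)"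
  by (simp add: BI_def)

lemma finite_BI_BI: "finite (BI N \<times> BI N)"
  by (simp add: finite_BI)

lemma amul_gmu_monomial:
  assumes "m < N" "n < N" "k < N" "l < N"
  shows "amul (BI N) (gmu N q u a) (monomial c (m, n)) (monomial d (k, l)) =
    monomial (c * d * q ^ (n * k) * (if m + k < N then 1 else u) * (if n + l < N then 1 else a))
      ((m + k) mod N, (n + l) mod N)"
  using assms
  by (subst amul_monomial_monomial[OF finite_BI]) (auto simp: BI_def gmu_def monomial_def)

lemma gmu_nonzero:
  "gmu N q u a (m, n) (k, l) (m', n') \<noteq> 0 \<Longrightarrow> m' = (m + k) mod N \<and> n' = (n + l) mod N"
  by (simp add: gmu_def split: if_splits)

lemma gmu_no_wrap:
  "m + k < N \<Longrightarrow> n + l < N \<Longrightarrow> gmu N q u a (m, n) (k, l) = gmu N q 1 0 (m, n) (k, l)"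
  by (simp add: gmu_def)

section \<open>The coaction of \<open>B\<^sub>(\<^sub>u\<^sub>,\<^sub>a\<^sub>)\<close> on the basis\<close>

text \<open>The index \<open>((m, n), (j, l))\<close> of \<open>B\<^sub>(\<^sub>u\<^sub>,\<^sub>a\<^sub>) \<otimes> H\<close> stands for \<open>v\<^sub>g ^ m v\<^sub>x ^ n \<otimes> g ^ j x ^ l\<close>;
  \<open>rho_g\<close> and \<open>rho_x\<close> are the images of \<open>v\<^sub>g\<close> and \<open>v\<^sub>x\<close> under the coaction.\<close>

definition BH_mu :: "nat \<Rightarrow> 'a::comm_ring_1 \<Rightarrow> 'a \<Rightarrow> 'a
    \<Rightarrow> (nat \<times> nat) \<times> (nat \<times> nat) \<Rightarrow> (nat \<times> nat) \<times> (nat \<times> nat) \<Rightarrow> (nat \<times> nat) \<times> (nat \<times> nat) \<Rightarrow> 'a" where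
  "BH_mu N q u a = tmu (gmu N q u a) (gmu N q 1 0)"

definition rho_g :: "(nat \<times> nat) \<times> (nat \<times> nat) \<Rightarrow> 'a::comm_ring_1" where
  "rho_g = monomial 1 ((1, 0), (1, 0))"

definition rho_x :: "(nat \<times> nat) \<times> (nat \<times> nat) \<Rightarrow> 'a::comm_ring_1" where
  "rho_x = (\<lambda>t. monomial 1 ((0, 0), (0, 1)) t + monomial 1 ((0, 1), (1, 0)) t)"

abbreviation BH_pow :: "nat \<Rightarrow> 'a::comm_ring_1 \<Rightarrow> 'a \<Rightarrow> 'a
    \<Rightarrow> ((nat \<times> nat) \<times> (nat \<times> nat) \<Rightarrow> 'a) \<Rightarrow> nat \<Rightarrow> (nat \<times> nat) \<times> (nat \<times> nat) \<Rightarrow> 'a" where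
  "BH_pow N q u a \<equiv> apow (BI N \<times> BI N) (BH_mu N q u a) ((0, 0), (0, 0))"

lemma B_rho_eq:
  "B_rho N q u a (m, n) = amul (BI N \<times> BI N) (BH_mu N q u a) (BH_pow N q u a rho_g m) (BH_pow N q u a rho_x n)"
  unfolding B_rho_def Let_def B_mu_def taft_mu_def BH_mu_def rho_g_def rho_x_def tens_bvec_bvec by simp

lemma taft_Delta_eq_B_rho: "taft_Delta N q = B_rho N q 1 0"
  unfolding B_rho_def taft_Delta_def B_mu_def taft_mu_def ..

lemma BH_mu_apply:
  "BH_mu N q u a ((m, n), (j, l)) ((m2, n2), (j2, l2)) ((m', n'), (j', l'))
     = gmu N q u a (m, n) (m2, n2) (m', n') * gmu N q 1 0 (j, l) (j2, l2) (j', l')"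
  by (simp add: BH_mu_def tmu_def)

lemma BH_mu_nonzero:
  assumes "BH_mu N q u a ((s1, s2), (s3, s4)) ((r1, r2), (r3, r4)) ((b1, b2), (h1, h2)) \<noteq> 0"
  shows "b1 = (s1 + r1) mod N \<and> b2 = (s2 + r2) mod N \<and> h1 = (s3 + r3) mod N \<and> h2 = (s4 + r4) mod N"
proof -
  have "gmu N q u a (s1, s2) (r1, r2) (b1, b2) \<noteq> 0" "gmu N q 1 0 (s3, s4) (r3, r4) (h1, h2) \<noteq> 0"
    using assms unfolding BH_mu_apply by auto
  then show ?thesis by (auto dest!: gmu_nonzero)
qed

lemma BH_mu_unit_left:
  assumes "0 < N" "\<And>t. w t \<noteq> 0 \<Longrightarrow> t \<in> BI N \<times> BI N"
  shows "amul (BI N \<times> BI N) (BH_mu N q u a) (monomial 1 ((0, 0), (0, 0))) w = w"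
proof
  fix k :: "(nat \<times> nat) \<times> (nat \<times> nat)"
  have unit: "BH_mu N q u a ((0, 0), (0, 0)) r k = (if k = r then 1 else 0)" if "r \<in> BI N \<times> BI N" for r
    using that by (cases r; cases k) (auto simp: BH_mu_apply BI_def gmu_def split: if_splits)
  have "((0, 0), (0, 0)) \<in> BI N \<times> BI N"
    using \<open>0 < N\<close> by (simp add: BI_def)
  then have "amul (BI N \<times> BI N) (BH_mu N q u a) (monomial 1 ((0, 0), (0, 0))) w k
      = (\<Sum>r\<in>BI N \<times> BI N. 1 * w r * BH_mu N q u a ((0, 0), (0, 0)) r k)"
    by (simp only: amul_monomial_left[OF finite_BI_BI])
  also have "\<dots> = (\<Sum>r\<in>BI N \<times> BI N. if r = k then w k else 0)"
    by (rule sum.cong) (auto simp: unit)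
  also have "\<dots> = w k"
    using assms(2)[of k] finite_BI_BI by (auto simp: sum.delta)
  finally show "amul (BI N \<times> BI N) (BH_mu N q u a) (monomial 1 ((0, 0), (0, 0))) w k = w k" .
qed

lemma rho_pow_g:
  "m < N \<Longrightarrow> BH_pow N q u a rho_g m = monomial 1 ((m, 0), (m, 0))"
proof (induction m)
  case 0
  show ?case by (simp add: bvec_eq_monomial)
next
  case (Suc m)
  then have "BH_pow N q u a rho_g (Suc m)
      = amul (BI N \<times> BI N) (BH_mu N q u a) (monomial 1 ((m, 0), (m, 0))) (monomial 1 ((1, 0), (1, 0)))"
    by (simp add: rho_g_def)
  also have "\<dots> = monomial 1 ((Suc m, 0), (Suc m, 0))"
    using Suc.prems
    by (subst amul_monomial_monomial)
      (auto simp: finite_BI BI_def monomial_def BH_mu_def tmu_def gmu_def split: prod.split)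
  finally show ?case .
qed

lemma rho_x_nonzero: "rho_x r \<noteq> (0::'a::comm_ring_1) \<Longrightarrow> r = ((0, 0), (0, 1)) \<or> r = ((0, 1), (1, 0))"
  by (auto simp: rho_x_def monomial_def split: if_splits)

lemma rho_pow_x_support:
  assumes "0 < N"
  shows "n < N \<Longrightarrow> BH_pow N q u a rho_x n ((b1, b2), (h1, h2)) \<noteq> 0
    \<Longrightarrow> b1 = 0 \<and> b2 \<le> n \<and> b2 < N \<and> h1 < N \<and> h2 < N"
proof (induction n arbitrary: b1 b2 h1 h2)
  case 0
  then show ?case using \<open>0 < N\<close> by (auto simp: bvec_def split: if_splits)
next
  case (Suc n)
  obtain s r where sr: "BH_pow N q u a rho_x n s \<noteq> 0" "rho_x r \<noteq> (0::'a)"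
    "BH_mu N q u a s r ((b1, b2), (h1, h2)) \<noteq> 0"
    using Suc.prems(2) by (auto elim: amul_nonzeroE)
  obtain s1 s2 s3 s4 where s: "s = ((s1, s2), (s3, s4))" by (metis prod.exhaust)
  have IH: "s1 = 0" "s2 \<le> n" using Suc s sr(1) by auto
  from rho_x_nonzero[OF sr(2)] show ?case
  proof
    assume "r = ((0, 0), (0, 1))"
    then have "b1 = s1 mod N \<and> b2 = s2 mod N \<and> h1 = s3 mod N \<and> h2 = (s4 + 1) mod N"
      using BH_mu_nonzero sr(3) s by fastforce
    moreover have "s2 mod N \<le> Suc n" using IH mod_less_eq_dividend[of s2 N] by linarith
    ultimately show ?thesis using IH \<open>0 < N\<close> by auto
  next
    assume "r = ((0, 1), (1, 0))"
    then have "b1 = s1 mod N \<and> b2 = (s2 + 1) mod N \<and> h1 = (s3 + 1) mod N \<and> h2 = s4 mod N"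
      using BH_mu_nonzero sr(3) s by fastforce
    moreover have "(s2 + 1) mod N \<le> Suc n" using IH mod_less_eq_dividend[of "s2 + 1" N] by linarith
    ultimately show ?thesis using IH \<open>0 < N\<close> by auto
  qed
qed

lemma rho_pow_x_Suc:
  assumes "1 < N"
  shows "BH_pow N q u a rho_x (Suc n) t
     = (\<Sum>s\<in>BI N \<times> BI N. BH_pow N q u a rho_x n s * BH_mu N q u a s ((0, 0), (0, 1)) t)
     + (\<Sum>s\<in>BI N \<times> BI N. BH_pow N q u a rho_x n s * BH_mu N q u a s ((0, 1), (1, 0)) t)"
  using assms
  by (simp add: rho_x_def amul_add_right amul_monomial_right finite_BI_BI BI_def)

lemma rho_pow_x_slice:
  assumes "0 < N"
  shows "n < N \<Longrightarrow> j < N \<Longrightarrow> l < N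
    \<Longrightarrow> BH_pow N q u a rho_x n ((0, 0), (j, l)) = (if j = 0 \<and> l = n then 1 else 0)"
proof (induction n arbitrary: j l)
  case 0
  then show ?case by (auto simp: bvec_def)
next
  case (Suc n)
  define P where "P = BH_pow N q u a rho_x n"
  define t where "t = ((0::nat, 0::nat), (j, l))"
  define s0 where "s0 = ((0::nat, 0::nat), (0::nat, n))"
  have "1 < N" "n < N" using Suc.prems by auto
  have s0: "s0 \<in> BI N \<times> BI N" using \<open>n < N\<close> by (simp add: s0_def BI_def)
  have "(\<Sum>s\<in>BI N \<times> BI N. P s * BH_mu N q u a s ((0, 1), (1, 0)) t) = 0"
  proof (intro sum.neutral ballI)
    fix s assume "s \<in> BI N \<times> BI N"
    obtain s1 s2 s3 s4 where s: "s = ((s1, s2), (s3, s4))" by (metis prod.exhaust)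
    show "P s * BH_mu N q u a s ((0, 1), (1, 0)) t = 0"
    proof (rule ccontr)
      assume "P s * BH_mu N q u a s ((0, 1), (1, 0)) t \<noteq> 0"
      then have "P s \<noteq> 0" "BH_mu N q u a s ((0, 1), (1, 0)) t \<noteq> 0" by auto
      then have "s2 \<le> n" "0 = (s2 + 1) mod N"
        using rho_pow_x_support[OF \<open>0 < N\<close> \<open>n < N\<close>, of q u a s1 s2 s3 s4]
          BH_mu_nonzero[of N q u a s1 s2 s3 s4 0 1 1 0 0 0 j l]
        unfolding P_def s t_def by auto
      then show False using Suc.prems by simp
    qed
  qed
  moreover have "(\<Sum>s\<in>BI N \<times> BI N. P s * BH_mu N q u a s ((0, 0), (0, 1)) t)
      = P s0 * BH_mu N q u a s0 ((0, 0), (0, 1)) t"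
  proof (rule sum_eq_single[OF finite_BI_BI s0])
    fix s assume "s \<in> BI N \<times> BI N" "s \<noteq> s0"
    obtain s1 s2 s3 s4 where s: "s = ((s1, s2), (s3, s4))" by (metis prod.exhaust)
    show "P s * BH_mu N q u a s ((0, 0), (0, 1)) t = 0"
    proof (rule ccontr)
      assume "P s * BH_mu N q u a s ((0, 0), (0, 1)) t \<noteq> 0"
      then have "P s \<noteq> 0" "BH_mu N q u a s ((0, 0), (0, 1)) t \<noteq> 0" by auto
      then have "s1 = 0" "s2 \<le> n" "s3 < N" "s4 < N" "0 = s2 mod N"
        using rho_pow_x_support[OF \<open>0 < N\<close> \<open>n < N\<close>, of q u a s1 s2 s3 s4]
          BH_mu_nonzero[of N q u a s1 s2 s3 s4 0 0 0 1 0 0 j l]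
        unfolding P_def s t_def by auto
      then have "P s = (if s3 = 0 \<and> s4 = n then 1 else 0)"
        using Suc.IH[OF \<open>n < N\<close>] \<open>n < N\<close> unfolding P_def s by simp
      then show False
        using \<open>P s \<noteq> 0\<close> \<open>s \<noteq> s0\<close> \<open>s1 = 0\<close> \<open>0 = s2 mod N\<close> \<open>s2 \<le> n\<close> \<open>n < N\<close>
        unfolding s s0_def by (auto split: if_splits)
    qed
  qed
  moreover have "P s0 = 1"
    using Suc.IH[OF \<open>n < N\<close>] \<open>0 < N\<close> \<open>n < N\<close> unfolding P_def s0_def by simp
  moreover have "BH_mu N q u a s0 ((0, 0), (0, 1)) t = (if j = 0 \<and> l = Suc n then 1 else 0)"
    using Suc.prems \<open>0 < N\<close> unfolding s0_def t_def by (auto simp: BH_mu_apply gmu_def)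
  ultimately show ?case
    using rho_pow_x_Suc[OF \<open>1 < N\<close>, of q u a n t] unfolding P_def t_def by simp
qed

lemma rho_pow_x_indep:
  assumes "0 < N"
  shows "n < N \<Longrightarrow> BH_pow N q u a rho_x n = BH_pow N q 1 0 rho_x n"
proof (induction n)
  case 0
  show ?case by simp
next
  case (Suc n)
  then have "n < N" by simp
  have "BH_pow N q u a rho_x (Suc n) = amul (BI N \<times> BI N) (BH_mu N q u a) (BH_pow N q 1 0 rho_x n) rho_x"
    using Suc by simp
  also have "\<dots> = amul (BI N \<times> BI N) (BH_mu N q 1 0) (BH_pow N q 1 0 rho_x n) rho_x"
  proof (rule amul_cong)
    fix s r assume "BH_pow N q 1 0 rho_x n s \<noteq> 0" "rho_x r \<noteq> (0::'a)"
    obtain s1 s2 s3 s4 where s: "s = ((s1, s2), (s3, s4))" by (metis prod.exhaust)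
    have "s1 = 0" "s2 + 1 < N"
      using rho_pow_x_support[OF \<open>0 < N\<close> \<open>n < N\<close>, of q 1 0 s1 s2 s3 s4] Suc.prems
        \<open>BH_pow N q 1 0 rho_x n s \<noteq> 0\<close> unfolding s by auto
    moreover have "r = ((0, 0), (0, 1)) \<or> r = ((0, 1), (1, 0))"
      using rho_x_nonzero \<open>rho_x r \<noteq> 0\<close> by blast
    ultimately show "BH_mu N q u a s r = BH_mu N q 1 0 s r"
      unfolding s BH_mu_def tmu_def using gmu_no_wrap[of s1 0 N s2 _ q u a] by auto
  qed
  finally show ?case by simp
qed

lemma B_rho_indep:
  assumes "(m, n) \<in> BI N"
  shows "B_rho N q u a (m, n) = B_rho N q 1 0 (m, n)"
proof -
  have "m < N" "n < N" "0 < N" using assms by (auto simp: BI_def)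
  have "B_rho N q u a (m, n)
      = amul (BI N \<times> BI N) (BH_mu N q u a) (monomial 1 ((m, 0), (m, 0))) (BH_pow N q 1 0 rho_x n)"
    unfolding B_rho_eq rho_pow_g[OF \<open>m < N\<close>] rho_pow_x_indep[OF \<open>0 < N\<close> \<open>n < N\<close>, where u = u and a = a] ..
  also have "\<dots> = amul (BI N \<times> BI N) (BH_mu N q 1 0) (monomial 1 ((m, 0), (m, 0))) (BH_pow N q 1 0 rho_x n)"
  proof (rule amul_cong)
    fix s r assume "monomial (1::'a) ((m, 0::nat), (m, 0::nat)) s \<noteq> 0" "BH_pow N q 1 0 rho_x n r \<noteq> 0"
    obtain r1 r2 r3 r4 where r: "r = ((r1, r2), (r3, r4))" by (metis prod.exhaust)
    have "s = ((m, 0), (m, 0))"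
      using \<open>monomial 1 ((m, 0), (m, 0)) s \<noteq> 0\<close> by (simp add: monomial_def split: if_splits)
    moreover have "r1 = 0" "r2 < N"
      using rho_pow_x_support[OF \<open>0 < N\<close> \<open>n < N\<close>, of q 1 0 r1 r2 r3 r4]
        \<open>BH_pow N q 1 0 rho_x n r \<noteq> 0\<close> unfolding r by auto
    ultimately show "BH_mu N q u a s r = BH_mu N q 1 0 s r"
      unfolding r BH_mu_def tmu_def using gmu_no_wrap[of m 0 N 0 r2 q u a] \<open>m < N\<close> by auto
  qed
  also have "\<dots> = B_rho N q 1 0 (m, n)"
    unfolding B_rho_eq rho_pow_g[OF \<open>m < N\<close>] ..
  finally show ?thesis .
qed

lemma B_rho_support:
  assumes "0 < N" "t \<notin> BI N \<times> BI N"
  shows "B_rho N q u a (m, n) t = 0"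
proof (rule ccontr)
  assume "B_rho N q u a (m, n) t \<noteq> 0"
  then obtain s r where "BH_mu N q u a s r t \<noteq> 0"
    unfolding B_rho_eq by (auto elim: amul_nonzeroE)
  then have "t \<in> BI N \<times> BI N"
    using BH_mu_nonzero \<open>0 < N\<close> by (cases s; cases r; cases t) (fastforce simp: BI_def)
  then show False using assms(2) by simp
qed

lemma B_rho_slice:
  assumes "(m, n) \<in> BI N" "m' < N" "j < N" "l < N"
  shows "B_rho N q u a (m, n) ((m', 0), (j, l)) = (if m' = m \<and> j = m \<and> l = n then 1 else 0)"
proof -
  have "m < N" "n < N" "0 < N" using assms by (auto simp: BI_def)
  define P where "P = BH_pow N q u a rho_x n"
  define t where "t = ((m', 0::nat), (j, l))"
  define s0 where "s0 = ((m, 0::nat), (m, 0::nat))"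
  define r0 where "r0 = ((0::nat, 0::nat), (0::nat, n))"
  have s0: "s0 \<in> BI N \<times> BI N" and r0: "r0 \<in> BI N \<times> BI N"
    using \<open>m < N\<close> \<open>n < N\<close> by (auto simp: s0_def r0_def BI_def)
  have "B_rho N q u a (m, n) t = (\<Sum>r\<in>BI N \<times> BI N. 1 * P r * BH_mu N q u a s0 r t)"
    unfolding B_rho_eq rho_pow_g[OF \<open>m < N\<close>] s0_def[symmetric] amul_monomial_left[OF finite_BI_BI s0] P_def ..
  also have "\<dots> = 1 * P r0 * BH_mu N q u a s0 r0 t"
  proof (rule sum_eq_single[OF finite_BI_BI r0])
    fix r assume "r \<in> BI N \<times> BI N" "r \<noteq> r0"
    obtain r1 r2 r3 r4 where r: "r = ((r1, r2), (r3, r4))" by (metis prod.exhaust)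
    show "1 * P r * BH_mu N q u a s0 r t = 0"
    proof (rule ccontr)
      assume "1 * P r * BH_mu N q u a s0 r t \<noteq> 0"
      then have "P r \<noteq> 0" "BH_mu N q u a s0 r t \<noteq> 0" by auto
      then have "r1 = 0" "r2 = 0" "r3 < N" "r4 < N"
        using rho_pow_x_support[OF \<open>0 < N\<close> \<open>n < N\<close>, of q u a r1 r2 r3 r4]
          BH_mu_nonzero[of N q u a m 0 m 0 r1 r2 r3 r4 m' 0 j l] \<open>n < N\<close>
        unfolding P_def r s0_def t_def by auto
      have "P r = (if r3 = 0 \<and> r4 = n then 1 else 0)"
        unfolding P_def r \<open>r1 = 0\<close> \<open>r2 = 0\<close>
        by (rule rho_pow_x_slice[OF \<open>0 < N\<close> \<open>n < N\<close> \<open>r3 < N\<close> \<open>r4 < N\<close>])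
      then show False
        using \<open>P r \<noteq> 0\<close> \<open>r \<noteq> r0\<close> \<open>r1 = 0\<close> \<open>r2 = 0\<close> unfolding r r0_def by (auto split: if_splits)
    qed
  qed
  also have "P r0 = 1"
    using rho_pow_x_slice[OF \<open>0 < N\<close> \<open>n < N\<close> \<open>0 < N\<close> \<open>n < N\<close>] unfolding P_def r0_def by simp
  also have "BH_mu N q u a s0 r0 t = (if m' = m \<and> j = m \<and> l = n then 1 else 0)"
    using assms \<open>m < N\<close> \<open>n < N\<close> unfolding s0_def r0_def t_def by (auto simp: BH_mu_apply gmu_def)
  finally show ?thesis unfolding t_def by simp
qed

lemma taft_Delta_one:
  assumes "0 < N"
  shows "taft_Delta N q (0, 0) = monomial 1 ((0, 0), (0, 0))"
  unfolding taft_Delta_eq_B_rho B_rho_eq rho_pow_g[OF assms]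
  by (simp add: bvec_eq_monomial) (rule BH_mu_unit_left[OF assms], auto simp: monomial_def BI_def assms split: if_splits)

lemma taft_Delta_g:
  assumes "1 < N"
  shows "taft_Delta N q (1, 0) = monomial 1 ((1, 0), (1, 0))"
  unfolding taft_Delta_eq_B_rho B_rho_eq rho_pow_g[OF assms] using assms
  by (simp add: bvec_eq_monomial amul_monomial_monomial finite_BI_BI BI_def)
    (auto simp: monomial_def BH_mu_apply gmu_def)

lemma taft_Delta_x:
  assumes "1 < N"
  shows "taft_Delta N q (0, 1) = rho_x"
proof -
  have "0 < N" using assms by simp
  have supp: "t \<in> BI N \<times> BI N" if "rho_x t \<noteq> 0" for t :: "(nat \<times> nat) \<times> (nat \<times> nat)"
    using rho_x_nonzero[OF that] assms by (auto simp: BI_def)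
  have "BH_pow N q 1 0 rho_x 1 = rho_x"
    using BH_mu_unit_left[OF \<open>0 < N\<close> supp] by (simp add: bvec_eq_monomial)
  then show ?thesis
    unfolding taft_Delta_eq_B_rho B_rho_eq rho_pow_g[OF \<open>0 < N\<close>]
    using BH_mu_unit_left[OF \<open>0 < N\<close> supp] by (simp add: bvec_eq_monomial)
qed

section \<open>Comodule maps \<open>H \<rightarrow> B\<^sub>(\<^sub>u\<^sub>,\<^sub>a\<^sub>)\<close>\<close>

lemma lin_ext_B_rho_slice:
  assumes "x < N" "y < N"
  shows "lin_ext (BI N) (B_rho N q u a) v ((x, 0), (x, y)) = v (x, y)"
proof -
  have xy: "(x, y) \<in> BI N" using assms by (simp add: BI_def)
  have "lin_ext (BI N) (B_rho N q u a) v ((x, 0), (x, y)) = v (x, y) * B_rho N q u a (x, y) ((x, 0), (x, y))"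
    unfolding lin_ext_def
  proof (rule sum_eq_single[OF finite_BI xy])
    fix s assume "s \<in> BI N" "s \<noteq> (x, y)"
    then show "v s * B_rho N q u a s ((x, 0), (x, y)) = 0"
      using B_rho_slice[of "fst s" "snd s" N x x y q u a] assms by (cases s) auto
  qed
  also have "B_rho N q u a (x, y) ((x, 0), (x, y)) = 1"
    using B_rho_slice[OF xy assms(1) assms] by simp
  finally show ?thesis by simp
qed

lemma vec_eq_on_BI:
  assumes "supp_in (BI N) v" "supp_in (BI N) w" "\<And>x y. x < N \<Longrightarrow> y < N \<Longrightarrow> v (x, y) = w (x, y)"
  shows "v = w"
proof
  fix p :: "nat \<times> nat"
  obtain x y where p: "p = (x, y)" by (metis prod.exhaust)
  show "v p = w p"
    unfolding p using assms by (cases "x < N \<and> y < N") (auto simp: supp_in_def BI_def)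
qed

lemma supp_in_monomial: "i \<in> I \<Longrightarrow> supp_in I (monomial c i)"
  by (simp add: supp_in_def monomial_def)

text \<open>Comparing the \<open>v\<^sub>g ^ x \<otimes> g ^ x x ^ y\<close>-coefficients of both sides of the comodule
  condition recovers the coefficient of \<open>v\<^sub>g ^ x v\<^sub>x ^ y\<close> in \<open>\<phi> i\<close>.\<close>

lemma B_comodule_map_coeff:
  assumes "B_comodule_map N q u a \<phi>" "i \<in> BI N" "x < N" "y < N"
  shows "\<phi> i (x, y) = lin_ext (BI N \<times> BI N) (\<lambda>(j, l). tens (\<phi> j) (bvec l)) (taft_Delta N q i) ((x, 0), (x, y))"
  using assms lin_ext_B_rho_slice[OF assms(3,4), of q u a "\<phi> i"]
  unfolding B_comodule_map_def by metis

lemma lin_ext_tens_monomial: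
  assumes "(j, l) \<in> BI N \<times> BI N"
  shows "lin_ext (BI N \<times> BI N) (\<lambda>(j, l). tens (\<phi> j) (bvec l)) (monomial c (j, l)) ((x, 0), (x, y))
    = c * \<phi> j (x, 0) * bvec l (x, y)"
  by (simp add: lin_ext_monomial[OF finite_BI_BI assms] tens_def)

lemma B_comodule_map_generators:
  assumes "2 \<le> N" and \<phi>: "B_comodule_map N q u a \<phi>"
  shows "\<phi> (0, 0) = monomial (\<phi> (0, 0) (0, 0)) (0, 0)"
    and "\<phi> (1, 0) = monomial (\<phi> (1, 0) (1, 0)) (1, 0)"
    and "\<phi> (0, 1) = (\<lambda>t. monomial (\<phi> (0, 0) (0, 0)) (0, 1) t + monomial (\<phi> (0, 1) (1, 0)) (1, 0) t)"
proof -
  have "0 < N" "1 < N" using assms by auto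
  then have BI: "(0, 0) \<in> BI N" "(1, 0) \<in> BI N" "(0, 1) \<in> BI N"
    by (auto simp: BI_def)
  have supp: "supp_in (BI N) (\<phi> i)" if "i \<in> BI N" for i
    using \<phi> that by (simp add: B_comodule_map_def)
  show "\<phi> (0, 0) = monomial (\<phi> (0, 0) (0, 0)) (0, 0)"
  proof (rule vec_eq_on_BI[OF supp[OF BI(1)] supp_in_monomial[OF BI(1)]])
    fix x y assume "x < N" "y < N"
    then have "\<phi> (0, 0) (x, y) = \<phi> (0, 0) (x, 0) * bvec (0, 0) (x, y)"
      unfolding B_comodule_map_coeff[OF \<phi> BI(1) \<open>x < N\<close> \<open>y < N\<close>] taft_Delta_one[OF \<open>0 < N\<close>]
      using BI by (simp add: lin_ext_tens_monomial)
    then show "\<phi> (0, 0) (x, y) = monomial (\<phi> (0, 0) (0, 0)) (0, 0) (x, y)"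
      by (simp add: bvec_def monomial_def)
  qed
  show "\<phi> (1, 0) = monomial (\<phi> (1, 0) (1, 0)) (1, 0)"
  proof (rule vec_eq_on_BI[OF supp[OF BI(2)] supp_in_monomial[OF BI(2)]])
    fix x y assume "x < N" "y < N"
    then have "\<phi> (1, 0) (x, y) = \<phi> (1, 0) (x, 0) * bvec (1, 0) (x, y)"
      unfolding B_comodule_map_coeff[OF \<phi> BI(2) \<open>x < N\<close> \<open>y < N\<close>] taft_Delta_g[OF \<open>1 < N\<close>]
      using BI by (simp add: lin_ext_tens_monomial)
    then show "\<phi> (1, 0) (x, y) = monomial (\<phi> (1, 0) (1, 0)) (1, 0) (x, y)"
      by (simp add: bvec_def monomial_def)
  qed
  show "\<phi> (0, 1) = (\<lambda>t. monomial (\<phi> (0, 0) (0, 0)) (0, 1) t + monomial (\<phi> (0, 1) (1, 0)) (1, 0) t)"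
  proof (rule vec_eq_on_BI[OF supp[OF BI(3)]])
    show "supp_in (BI N) (\<lambda>t. monomial (\<phi> (0, 0) (0, 0)) (0, 1) t + monomial (\<phi> (0, 1) (1, 0)) (1, 0) t)"
      using BI by (simp add: supp_in_def monomial_def)
    fix x y assume "x < N" "y < N"
    then have "\<phi> (0, 1) (x, y) = \<phi> (0, 0) (x, 0) * bvec (0, 1) (x, y) + \<phi> (0, 1) (x, 0) * bvec (1, 0) (x, y)"
      unfolding B_comodule_map_coeff[OF \<phi> BI(3) \<open>x < N\<close> \<open>y < N\<close>] taft_Delta_x[OF \<open>1 < N\<close>]
      using BI by (simp add: rho_x_def lin_ext_add lin_ext_tens_monomial)
    then show "\<phi> (0, 1) (x, y) = monomial (\<phi> (0, 0) (0, 0)) (0, 1) (x, y) + monomial (\<phi> (0, 1) (1, 0)) (1, 0) (x, y)"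
      by (simp add: bvec_def monomial_def)
  qed
qed

text \<open>The identity of the common basis is a comodule map \<open>H \<rightarrow> B\<^sub>(\<^sub>u\<^sub>,\<^sub>a\<^sub>)\<close>, since
  \<open>\<rho>\<close> and \<open>\<Delta>\<close> agree on the basis.\<close>

lemma B_comodule_map_bvec:
  assumes "0 < N"
  shows "B_comodule_map N q u a bvec"
  unfolding B_comodule_map_def
proof (intro conjI ballI ext)
  fix i :: "nat \<times> nat" and k :: "(nat \<times> nat) \<times> (nat \<times> nat)"
  assume i: "i \<in> BI N"
  show "supp_in (BI N) (bvec i)"
    using i by (simp add: bvec_eq_monomial supp_in_monomial)
  have "lin_ext (BI N) (B_rho N q u a) (bvec i) k = B_rho N q u a i k"
    by (simp add: bvec_eq_monomial lin_ext_monomial[OF finite_BI i])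
  also have "\<dots> = (if k \<in> BI N \<times> BI N then taft_Delta N q i k else 0)"
    using B_rho_support[OF assms, of k q 1 0] B_rho_indep[of _ _ N q u a] i
    by (cases i) (simp add: taft_Delta_eq_B_rho)
  also have "\<dots> = (\<Sum>p\<in>BI N \<times> BI N. taft_Delta N q i p * (if p = k then 1 else 0))"
    using finite_BI_BI by (simp add: if_distrib [of "\<lambda>x. _ * x"] sum.delta' cong: if_cong)
  also have "\<dots> = lin_ext (BI N \<times> BI N) (\<lambda>(j, l). tens (bvec j) (bvec l)) (taft_Delta N q i) k"
    unfolding lin_ext_def by (rule sum.cong) (auto simp: tens_bvec_bvec monomial_def)
  finally show "lin_ext (BI N) (B_rho N q u a) (bvec i) k
      = lin_ext (BI N \<times> BI N) (\<lambda>(j, l). tens (bvec j) (bvec l)) (taft_Delta N q i) k" .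
qed

section \<open>An identity of \<open>B\<^sub>(\<^sub>u\<^sub>,\<^sub>a\<^sub>)\<close> that detects \<open>a\<close>\<close>

text \<open>The letter \<open>(0, h)\<close> is the variable \<open>Z\<^sub>0\<^sup>h\<close>. The identity \<open>sep_poly N q a\<close> is the
  expansion into words of \<open>[Z\<^sup>g, Z\<^sup>x] ^ N - sep_const N q * a * (Z\<^sup>1) ^ N (Z\<^sup>g) ^ N\<close>, the
  power \<open>[Z\<^sup>g, Z\<^sup>x] ^ N\<close> being expanded along the lists \<open>bs\<close> choosing one of the two
  terms in each factor.\<close>

definition letter_one :: letter where "letter_one = (0, (0, 0))"
definition letter_g :: letter where "letter_g = (0, (1, 0))"
definition letter_x :: letter where "letter_x = (0, (0, 1))"

definition comm_word :: "bool list \<Rightarrow> letter list" where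
  "comm_word bs = concat (map (\<lambda>b. if b then [letter_g, letter_x] else [letter_x, letter_g]) bs)"

definition comm_sign :: "bool list \<Rightarrow> 'a::comm_ring_1" where
  "comm_sign bs = (\<Prod>b\<leftarrow>bs. if b then 1 else - 1)"

definition sep_const :: "nat \<Rightarrow> 'a::comm_ring_1 \<Rightarrow> 'a" where
  "sep_const N q = (\<Prod>i<N. q ^ i - q ^ (Suc i mod N))"

definition sep_word :: "nat \<Rightarrow> letter list" where
  "sep_word N = replicate N letter_one @ replicate N letter_g"

definition sep_poly :: "nat \<Rightarrow> 'a::comm_ring_1 \<Rightarrow> 'a \<Rightarrow> letter list \<Rightarrow> 'a" where
  "sep_poly N q a w = (\<Sum>bs | length bs = N. if comm_word bs = w then comm_sign bs else 0)
     - (if w = sep_word N then sep_const N q * a else 0)"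

lemma finite_bool_lists_length: "finite {bs :: bool list. length bs = n}"
  using finite_lists_length_eq[of "UNIV :: bool set" n] by simp

lemma sum_bool_lists_Suc:
  "(\<Sum>bs | length bs = Suc n. f bs) = (\<Sum>bs | length bs = n. f (bs @ [True]) + f (bs @ [False]))"
proof -
  have "{bs. length bs = Suc n}
      = (\<lambda>bs. bs @ [True]) ` {bs. length bs = n} \<union> (\<lambda>bs. bs @ [False]) ` {bs. length bs = n}"
  proof (intro set_eqI iffI)
    fix xs :: "bool list" assume "xs \<in> {bs. length bs = Suc n}"
    then obtain ys y where "xs = ys @ [y]" "length ys = n"
      by (cases xs rule: rev_exhaust) auto
    then show "xs \<in> (\<lambda>bs. bs @ [True]) ` {bs. length bs = n} \<union> (\<lambda>bs. bs @ [False]) ` {bs. length bs = n}"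
      by (cases y) auto
  qed auto
  then have "(\<Sum>bs | length bs = Suc n. f bs)
      = (\<Sum>bs\<in>(\<lambda>bs. bs @ [True]) ` {bs. length bs = n}. f bs) + (\<Sum>bs\<in>(\<lambda>bs. bs @ [False]) ` {bs. length bs = n}. f bs)"
    by (simp only:) (intro sum.union_disjoint, auto simp: finite_bool_lists_length)
  also have "\<dots> = (\<Sum>bs | length bs = n. f (bs @ [True])) + (\<Sum>bs | length bs = n. f (bs @ [False]))"
    by (simp add: sum.reindex inj_on_def)
  finally show ?thesis by (simp add: sum.distrib)
qed

lemma sep_poly_support:
  assumes "sep_poly N q a w \<noteq> 0"
  shows "w \<in> comm_word ` {bs. length bs = N} \<union> {sep_word N}"
proof (rule ccontr)
  assume "w \<notin> comm_word ` {bs. length bs = N} \<union> {sep_word N}"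
  then have "sep_poly N q a w = 0"
    unfolding sep_poly_def by (auto intro!: sum.neutral)
  with assms show False by simp
qed

lemma B_eval_word_Nil: "B_eval_word N q u a \<phi> [] = monomial 1 (0, 0)"
  by (simp add: B_eval_word_def bvec_eq_monomial)

lemma B_eval_word_snoc:
  "B_eval_word N q u a \<phi> (w @ [l]) = amul (BI N) (B_mu N q u a) (B_eval_word N q u a \<phi> w) (\<phi> (fst l) (snd l))"
  by (simp add: B_eval_word_def)

lemma B_eval_comm_sum_Suc:
  fixes N :: nat and q u a :: "'a::comm_ring_1" and \<phi> :: "nat \<Rightarrow> nat \<times> nat \<Rightarrow> nat \<times> nat \<Rightarrow> 'a"
  defines "M \<equiv> amul (BI N) (B_mu N q u a)" and "E \<equiv> B_eval_word N q u a \<phi>"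
  defines "S \<equiv> \<lambda>n k. \<Sum>bs | length bs = n. comm_sign bs * E (comm_word bs) k"
  shows "S (Suc n) = (\<lambda>k. M (M (S n) (\<phi> 0 (1, 0))) (\<phi> 0 (0, 1)) k - M (M (S n) (\<phi> 0 (0, 1))) (\<phi> 0 (1, 0)) k)"
proof
  fix k
  have "E (comm_word (bs @ [True])) = M (M (E (comm_word bs)) (\<phi> 0 (1, 0))) (\<phi> 0 (0, 1))"
    and "E (comm_word (bs @ [False])) = M (M (E (comm_word bs)) (\<phi> 0 (0, 1))) (\<phi> 0 (1, 0))" for bs
  proof -
    have "comm_word (bs @ [True]) = (comm_word bs @ [letter_g]) @ [letter_x]"
      and "comm_word (bs @ [False]) = (comm_word bs @ [letter_x]) @ [letter_g]"
      by (simp_all add: comm_word_def)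
    then show "E (comm_word (bs @ [True])) = M (M (E (comm_word bs)) (\<phi> 0 (1, 0))) (\<phi> 0 (0, 1))"
      and "E (comm_word (bs @ [False])) = M (M (E (comm_word bs)) (\<phi> 0 (0, 1))) (\<phi> 0 (1, 0))"
      by (simp_all only: E_def M_def B_eval_word_snoc) (simp_all add: letter_g_def letter_x_def)
  qed
  moreover have "comm_sign (bs @ [True]) = (comm_sign bs :: 'a)"
    and "comm_sign (bs @ [False]) = - (comm_sign bs :: 'a)" for bs
    by (simp_all add: comm_sign_def)
  ultimately have "S (Suc n) k = (\<Sum>bs | length bs = n.
      comm_sign bs * M (M (E (comm_word bs)) (\<phi> 0 (1, 0))) (\<phi> 0 (0, 1)) k
      - comm_sign bs * M (M (E (comm_word bs)) (\<phi> 0 (0, 1))) (\<phi> 0 (1, 0)) k)"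
    unfolding S_def sum_bool_lists_Suc by simp
  also have "\<dots> = M (M (S n) (\<phi> 0 (1, 0))) (\<phi> 0 (0, 1)) k - M (M (S n) (\<phi> 0 (0, 1))) (\<phi> 0 (1, 0)) k"
    unfolding S_def M_def by (simp only: amul_sum_left sum_subtractf)
  finally show "S (Suc n) k = M (M (S n) (\<phi> 0 (1, 0))) (\<phi> 0 (0, 1)) k - M (M (S n) (\<phi> 0 (0, 1))) (\<phi> 0 (1, 0)) k" .
qed

context
  fixes N :: nat and q u a c d e :: "'a::comm_ring_1" and \<phi> :: "nat \<Rightarrow> nat \<times> nat \<Rightarrow> nat \<times> nat \<Rightarrow> 'a"
  assumes N: "2 \<le> N"
    and \<phi>_one: "\<phi> 0 (0, 0) = monomial c (0, 0)"
    and \<phi>_g: "\<phi> 0 (1, 0) = monomial e (1, 0)"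
    and \<phi>_x: "\<phi> 0 (0, 1) = (\<lambda>t. monomial c (0, 1) t + monomial d (1, 0) t)"
begin

text \<open>\<open>v\<^sub>g ^ n v\<^sub>x ^ n [e v\<^sub>g, c v\<^sub>x + d v\<^sub>g] = c e (q ^ n - q ^ (n + 1)) v\<^sub>g ^ (n + 1) v\<^sub>x ^ (n + 1)\<close>:
  the \<open>d\<close>-terms cancel, and \<open>v\<^sub>x ^ n v\<^sub>g = q ^ n v\<^sub>g v\<^sub>x ^ n\<close>.\<close>

lemma B_commutator_step:
  assumes "n < N"
  shows "(\<lambda>k. amul (BI N) (B_mu N q u a) (amul (BI N) (B_mu N q u a) (monomial \<kappa> (n, n)) (\<phi> 0 (1, 0))) (\<phi> 0 (0, 1)) k
      - amul (BI N) (B_mu N q u a) (amul (BI N) (B_mu N q u a) (monomial \<kappa> (n, n)) (\<phi> 0 (0, 1))) (\<phi> 0 (1, 0)) k)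
    = monomial (\<kappa> * c * e * (if Suc n = N then u * a else 1) * (q ^ n - q ^ (Suc n mod N))) (Suc n mod N, Suc n mod N)"
proof -
  have "0 < N" "1 < N" using N by simp_all
  show ?thesis
    using assms \<open>0 < N\<close> \<open>1 < N\<close> unfolding \<phi>_g \<phi>_x B_mu_def
    by (cases "Suc n = N")
      (simp_all add: amul_add_right amul_add_left amul_gmu_monomial,
       simp_all add: fun_eq_iff monomial_def algebra_simps)
qed

lemma B_eval_comm_sum:
  "n \<le> N \<Longrightarrow> (\<lambda>k. \<Sum>bs | length bs = n. comm_sign bs * B_eval_word N q u a \<phi> (comm_word bs) k)
    = monomial ((c * e) ^ n * (\<Prod>i<n. q ^ i - q ^ (Suc i mod N)) * (if n = N then u * a else 1)) (n mod N, n mod N)"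
proof (induction n)
  case 0
  show ?case
    using N by (simp add: comm_sign_def comm_word_def B_eval_word_Nil)
next
  case (Suc n)
  then have "n < N" "n \<noteq> N" by simp_all
  then show ?case
    unfolding B_eval_comm_sum_Suc Suc.IH[OF less_imp_le[OF \<open>n < N\<close>]]
    using B_commutator_step[OF \<open>n < N\<close>] by (simp add: algebra_simps)
qed

lemma B_eval_word_ones: "B_eval_word N q u a \<phi> (replicate j letter_one) = monomial (c ^ j) (0, 0)"
proof (induction j)
  case 0
  then show ?case by (simp add: B_eval_word_Nil)
next
  case (Suc j)
  then show ?case
    using N unfolding replicate_Suc replicate_append_same[symmetric] B_eval_word_snoc
    by (simp add: letter_one_def \<phi>_one B_mu_def amul_gmu_monomial algebra_simps)
qed

lemma B_eval_word_ones_gs: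
  "j \<le> N \<Longrightarrow> B_eval_word N q u a \<phi> (replicate N letter_one @ replicate j letter_g)
    = monomial (c ^ N * e ^ j * (if j = N then u else 1)) (j mod N, 0)"
proof (induction j)
  case 0
  show ?case using N by (simp add: B_eval_word_ones)
next
  case (Suc j)
  then have "j < N" by simp
  then show ?case
    using N Suc.IH
    unfolding replicate_Suc replicate_append_same[symmetric] append_assoc[symmetric] B_eval_word_snoc
      letter_g_def fst_conv snd_conv \<phi>_g
    by (simp add: B_mu_def amul_gmu_monomial algebra_simps)
qed

lemma B_eval_sep_poly:
  "B_eval N q u a \<phi> (sep_poly N q a') = monomial (sep_const N q * (c * e) ^ N * u * (a - a')) (0, 0)"
proof
  fix k
  define E where "E = B_eval_word N q u a \<phi>"
  define W where "W = comm_word ` {bs. length bs = N} \<union> {sep_word N}"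
  have "finite W"
    by (simp add: W_def finite_bool_lists_length)
  have "B_eval N q u a \<phi> (sep_poly N q a') k = (\<Sum>w\<in>W. sep_poly N q a' w * E w k)"
    unfolding B_eval_def E_def
    by (rule sum.mono_neutral_left) (use \<open>finite W\<close> sep_poly_support in \<open>auto simp: W_def\<close>)
  also have "\<dots> = (\<Sum>w\<in>W. \<Sum>bs | length bs = N. if comm_word bs = w then comm_sign bs * E w k else 0)
      - (\<Sum>w\<in>W. if w = sep_word N then sep_const N q * a' * E w k else 0)"
  proof -
    have if_mult: "(if P then x else 0) * y = (if P then x * y else 0)" for P and x y :: 'a
      by simp
    show ?thesis
      unfolding sep_poly_def left_diff_distrib sum_distrib_right if_mult by (simp add: sum_subtractf)
  qed
  also have "\<dots> = (\<Sum>bs | length bs = N. comm_sign bs * E (comm_word bs) k) - sep_const N q * a' * E (sep_word N) k"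
  proof -
    have "(\<Sum>w\<in>W. if comm_word bs = w then comm_sign bs * E w k else 0) = comm_sign bs * E (comm_word bs) k"
      if "length bs = N" for bs
      using that \<open>finite W\<close> by (simp add: W_def sum.delta)
    moreover have "sep_word N \<in> W"
      by (simp add: W_def)
    ultimately show ?thesis
      using \<open>finite W\<close> by (subst sum.swap) (simp add: sum.delta')
  qed
  also have "\<dots> = sep_const N q * (c * e) ^ N * u * (a - a') * monomial 1 (0, 0) k"
    using fun_cong[OF B_eval_comm_sum[OF order_refl], of k] B_eval_word_ones_gs[OF order_refl]
    by (simp add: E_def sep_word_def sep_const_def monomial_def algebra_simps power_mult_distrib)
  finally show "B_eval N q u a \<phi> (sep_poly N q a') k = monomial (sep_const N q * (c * e) ^ N * u * (a - a')) (0, 0) k"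
    by (simp add: monomial_def)
qed

end

lemma T_elem_sep_poly:
  assumes "2 \<le> N"
  shows "T_elem N (sep_poly N q a)"
  unfolding T_elem_def
proof (intro conjI allI impI ballI)
  show "finite {w. sep_poly N q a w \<noteq> 0}"
    by (rule finite_subset[of _ "comm_word ` {bs. length bs = N} \<union> {sep_word N}"])
      (use sep_poly_support finite_bool_lists_length in auto)
  fix w l assume "sep_poly N q a w \<noteq> 0" "l \<in> set w"
  then have "l \<in> {letter_one, letter_g, letter_x}"
    using sep_poly_support by (fastforce simp: sep_word_def comm_word_def split: if_splits)
  then show "snd l \<in> BI N"
    using assms by (auto simp: letter_one_def letter_g_def letter_x_def BI_def)
qed

lemma sep_poly_mem_Id_B:
  assumes "2 \<le> N"
  shows "sep_poly N q a \<in> Id_B N q u a"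
  unfolding Id_B_def
proof (intro CollectI conjI allI impI)
  show "T_elem N (sep_poly N q a)"
    using assms by (rule T_elem_sep_poly)
  fix \<phi> :: "nat \<Rightarrow> nat \<times> nat \<Rightarrow> nat \<times> nat \<Rightarrow> 'a"
  assume "\<forall>i. B_comodule_map N q u a (\<phi> i)"
  then have "B_comodule_map N q u a (\<phi> 0)" ..
  note generators = B_comodule_map_generators[OF assms this]
  show "B_eval N q u a \<phi> (sep_poly N q a) = (\<lambda>_. 0)"
    unfolding B_eval_sep_poly[where \<phi> = \<phi>, OF assms generators] by (simp add: monomial_def fun_eq_iff)
qed

lemma sep_poly_mem_Id_B_imp_eq_0:
  assumes "2 \<le> N" "sep_poly N q a \<in> Id_B N q u' a'"
  shows "sep_const N q * u' * (a' - a) = 0"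
proof -
  have "B_eval N q u' a' (\<lambda>_. bvec) (sep_poly N q a) = (\<lambda>_. 0)"
    using assms B_comodule_map_bvec[of N q u' a'] unfolding Id_B_def by auto
  moreover have "B_eval N q u' a' (\<lambda>_. bvec) (sep_poly N q a)
      = monomial (sep_const N q * (1 * 1) ^ N * u' * (a' - a)) (0, 0)"
    by (rule B_eval_sep_poly[where \<phi> = "\<lambda>_. bvec" and c = 1 and e = 1 and d = 0, OF assms(1)])
      (simp_all add: bvec_def monomial_def fun_eq_iff)
  ultimately have "monomial (sep_const N q * (1 * 1) ^ N * u' * (a' - a)) (0 :: nat, 0 :: nat) = (\<lambda>_. 0)"
    by simp
  from fun_cong[OF this, of "(0, 0)"] show ?thesis
    by (simp add: monomial_def)
qed

lemma pow_mod_eq_pow: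
  fixes q :: "'a::monoid_mult"
  assumes "q ^ N = 1"
  shows "q ^ (k mod N) = q ^ k"
proof -
  have "q ^ k = q ^ (N * (k div N) + k mod N)"
    by (simp only: mult_div_mod_eq)
  also have "\<dots> = (q ^ N) ^ (k div N) * q ^ (k mod N)"
    by (simp only: power_add power_mult)
  finally show ?thesis
    using assms by simp
qed

lemma sep_const_dvd_1:
  fixes q :: "'a::comm_ring_1"
  assumes "q ^ N = 1" "(1 - q) dvd 1"
  shows "sep_const N q dvd 1"
proof -
  have "(q ^ i - q ^ (Suc i mod N)) dvd 1" if "i < N" for i
  proof -
    have "q * q ^ (N - 1) = 1"
      using assms(1) \<open>i < N\<close> by (simp flip: power_Suc)
    then have "q dvd 1"
      by (metis dvd_triv_left)
    then have "(q ^ i * (1 - q)) dvd 1"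
      using assms(2) mult_dvd_mono[of "q ^ i" 1 "1 - q" 1] dvd_power_same[of q 1 i] by simp
    moreover have "q ^ i - q ^ (Suc i mod N) = q ^ i * (1 - q)"
      by (simp add: pow_mod_eq_pow[OF assms(1)] algebra_simps)
    ultimately show ?thesis by simp
  qed
  then have "(\<Prod>i<N. q ^ i - q ^ (Suc i mod N)) dvd (\<Prod>i<N. 1)"
    by (intro prod_dvd_prod) simp
  then show ?thesis
    by (simp add: sep_const_def)
qed

theorem proposition3p2:
  fixes N :: nat and q u u' a a' :: "'a::comm_ring_1"
  assumes "N \<ge> 2"
    and "is_cyclotomic_root N q"
    and "u dvd 1" and "u' dvd 1"
    and "(1 - q) dvd 1"
    and "Id_B N q u a = Id_B N q u' a'"
  shows "a' = a"
proof -
  have "q ^ N = 1"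
    using assms(1,2) by (intro cyclotomic_root_pow_eq_1) simp_all
  then have "sep_const N q * u' dvd 1"
    using mult_dvd_mono[OF sep_const_dvd_1 assms(4)] assms(5) by simp
  then obtain w where w: "1 = sep_const N q * u' * w" ..
  have "sep_poly N q a \<in> Id_B N q u' a'"
    using sep_poly_mem_Id_B[OF assms(1)] assms(6) by blast
  then have K: "sep_const N q * u' * (a' - a) = 0"
    using assms(1) by (intro sep_poly_mem_Id_B_imp_eq_0)
  have "a' - a = sep_const N q * u' * w * (a' - a)"
    using w by simp
  also have "\<dots> = w * (sep_const N q * u' * (a' - a))"
    by (simp only: ac_simps)
  finally show ?thesis
    using K by simp
qed

end
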